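(* Let $\epsilon>0$ and $b_1,b_2>\frac12$. For $\lambda\in[1,\infty]$ define the bilinear operator $MP_\lambda$ by $$\widehat{MP_\lambda(u,v)}^\lambda(\tau,\xi,q)=\frac1\lambda\int_{\mathbb{R}^2}\sum_{q_1\in\mathbb{Z}/\lambda}\bigl||(\xi_1,q_1)|^2-|(\xi_2,q_2)|^2\bigr|^{1/2}\hat u^\lambda(\tau_1,\xi_1,q_1)\hat v^\lambda(\tau_2,\xi_2,q_2)\,d\tau_1d\xi_1$$ for $\lambda<\infty$, where $(\tau_2,\xi_2,q_2)=(\tau-\tau_1,\xi-\xi_1,q-q_1)$, and analogously for $\lambda=\infty$ with the sum over $q_1$ replaced by an integral over $\eta_1\in\mathbb{R}$ (and no factor $1/\lambda$). Then $$\|MP_\lambda(u,v)\|_{L^2_{txy,\lambda}}\lesssim_{\epsilon,b_1,b_2}\|J_y^{\frac12+\epsilon}u\|_{X_{0,b_1,\lambda}}\|v\|_{X_{0,b_2,\lambda}}$$ for all $u,v$ with $J_y^{1/2+\epsilon}u\in X_{0,b_1,\lambda}$ and $v\in X_{0,b_2,\lambda}$, where the implicit constant is independent of $\lambda\in[1,\infty]$.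
   Context: Notation: $|(\xi,q)|^2:=3\xi^2+q^2$ (dilated norm), while $\langle z\rangle=(1+|z|_2^2)^{1/2}$ uses the Euclidean norm. For $\lambda\in(0,\infty)$, $\mathbb{T}_\lambda=\mathbb{R}/2\pi\lambda\mathbb{Z}$; $\mathbb{T}_\infty=\mathbb{R}$. For $f$ on $\mathbb{R}_t\times\mathbb{R}_x\times\mathbb{T}_{\lambda,y}$, $\hat f^\lambda(\tau,\xi,q)=\int_{\mathbb{R}^2}\int_{-\pi\lambda}^{\pi\lambda}e^{-i(t\tau+x\xi+yq)}f\,dy\,dx\,dt$, $q\in\mathbb{Z}/\lambda$ (for $\lambda=\infty$, $q=\eta\in\mathbb{R}$). With $\phi(\xi,q)=\xi(\xi^2+q^2)$, $\|f\|^2_{X_{s,b,\lambda}}=\frac{1}{(2\pi)^3\lambda}\int_{\mathbb{R}^2}\sum_{q\in\mathbb{Z}/\lambda}\langle(\xi,q)\rangle^{2s}\langle\tau-\phi(\xi,q)\rangle^{2b}|\hat f^\lambda|^2d\tau d\xi$ (for $\lambda=\infty$: $\frac1{(2\pi)^3}\int_{\mathbb{R}^3}$). $J_y^\sigma$ is the Fourier multiplier $\langle q\rangle^\sigma$ in $y$. $L^p_{txy,\lambda}=L^p(\mathbb{R}\times\mathbb{R}\times\mathbb{T}_\lambda)$. *)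

theory Defs
  imports "HOL-Analysis.Analysis"
begin

text \<open>Frequency variables are triples (tau, xi, q) :: real \<times> real \<times> real.
  For finite lambda, q ranges over the lattice Z/lambda.\<close>

definition lattice :: "real \<Rightarrow> real set" where
  "lattice lam = {q. \<exists>k::int. q = of_int k / lam}"

definition freq_measure :: "ereal \<Rightarrow> (real \<times> real \<times> real) measure" where
  "freq_measure lam =
     (if lam = \<infinity> then lborel \<Otimes>\<^sub>M lborel \<Otimes>\<^sub>M lborel
      else scale_measure (ennreal (1 / real_of_ereal lam))
             (lborel \<Otimes>\<^sub>M lborel \<Otimes>\<^sub>M count_space (lattice (real_of_ereal lam))))"

definition japanese :: "real \<Rightarrow> real" where
  "japanese z = sqrt (1 + z\<^sup>2)"

definition japanese2 :: "real \<Rightarrow> real \<Rightarrow> real" where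
  "japanese2 x y = sqrt (1 + x\<^sup>2 + y\<^sup>2)"

definition phase :: "real \<Rightarrow> real \<Rightarrow> real" where
  "phase xi q = xi * (xi\<^sup>2 + q\<^sup>2)"

text \<open>Squared X_{s,b,lambda} norm, expressed through the (space-time) Fourier transform f = \<hat>u^lambda.\<close>

definition Xsq :: "ereal \<Rightarrow> real \<Rightarrow> real \<Rightarrow> (real \<times> real \<times> real \<Rightarrow> complex) \<Rightarrow> ennreal" where
  "Xsq lam s b f =
     (\<integral>\<^sup>+ z. ennreal (japanese2 (fst (snd z)) (snd (snd z)) powr (2 * s)
                   * japanese (fst z - phase (fst (snd z)) (snd (snd z))) powr (2 * b)
                   * (cmod (f z))\<^sup>2) \<partial>freq_measure lam) / ennreal ((2 * pi) ^ 3)"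

text \<open>Squared X_{0,b,lambda} norm of J_y^sigma u, whose Fourier transform is <q>^sigma \<hat>u.\<close>

definition XJsq :: "ereal \<Rightarrow> real \<Rightarrow> real \<Rightarrow> (real \<times> real \<times> real \<Rightarrow> complex) \<Rightarrow> ennreal" where
  "XJsq lam \<sigma> b f = Xsq lam 0 b (\<lambda>z. complex_of_real (japanese (snd (snd z)) powr \<sigma>) * f z)"

text \<open>Squared L^2_{txy,lambda} norm via Plancherel: equals the X_{0,0,lambda} norm of the Fourier transform.\<close>

definition L2sq :: "ereal \<Rightarrow> (real \<times> real \<times> real \<Rightarrow> complex) \<Rightarrow> ennreal" where
  "L2sq lam F = Xsq lam 0 0 F"

definition mp_kernel :: "real \<times> real \<times> real \<Rightarrow> real \<times> real \<times> real \<Rightarrow> real" where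
  "mp_kernel z1 z2 =
     \<bar>(3 * (fst (snd z1))\<^sup>2 + (snd (snd z1))\<^sup>2) - (3 * (fst (snd z2))\<^sup>2 + (snd (snd z2))\<^sup>2)\<bar> powr (1/2)"

text \<open>Fourier transform of MP_lambda(u,v), given f = \<hat>u^lambda, g = \<hat>v^lambda.\<close>

definition MP_hat :: "ereal \<Rightarrow> (real \<times> real \<times> real \<Rightarrow> complex) \<Rightarrow> (real \<times> real \<times> real \<Rightarrow> complex)
                      \<Rightarrow> real \<times> real \<times> real \<Rightarrow> complex" where
  "MP_hat lam f g z =
     (LINT z1|freq_measure lam. complex_of_real (mp_kernel z1 (z - z1)) * f z1 * g (z - z1))"

end

theory Submission
  imports Defs
begin

text \<open>
  By Cauchy--Schwarz in the convolution variable, with the weights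
  \<open>w\<^sub>1 = \<langle>q\<rangle>\<^bsup>2\<sigma>\<^esup>\<langle>\<tau> - \<phi>\<rangle>\<^bsup>2b\<^sub>1\<^esup>\<close> of \<open>J\<^sub>y\<^bsup>\<sigma>\<^esup>u\<close> and
  \<open>w\<^sub>2 = \<langle>\<tau> - \<phi>\<rangle>\<^bsup>2b\<^sub>2\<^esup>\<close> of \<open>v\<close> (where \<open>\<sigma> = 1/2 + \<epsilon>\<close>), the estimate reduces to a bound on
  \<open>\<integral> K(z\<^sub>1, z - z\<^sub>1)\<^sup>2 / (w\<^sub>1(z\<^sub>1) w\<^sub>2(z - z\<^sub>1)) dz\<^sub>1\<close> that is uniform in \<open>z\<close> and \<open>\<lambda>\<close>.
  The squared kernel \<open>\<bar>(3\<xi>\<^sub>1\<^sup>2 + q\<^sub>1\<^sup>2) - (3\<xi>\<^sub>2\<^sup>2 + q\<^sub>2\<^sup>2)\<bar>\<close> is exactly the absolute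
  \<open>\<xi>\<^sub>1\<close>-derivative of the resonance \<open>\<phi>(\<xi>\<^sub>1, q\<^sub>1) + \<phi>(\<xi> - \<xi>\<^sub>1, q - q\<^sub>1)\<close>, which is
  quadratic in \<open>\<xi>\<^sub>1\<close>. Hence, after integrating in \<open>\<tau>\<^sub>1\<close>, a change of variables in \<open>\<xi>\<^sub>1\<close>
  (at most two-to-one) bounds the \<open>(\<tau>\<^sub>1, \<xi>\<^sub>1)\<close> integral by
  \<open>2 \<integral>\<langle>s\<rangle>\<^bsup>-2b\<^sub>1\<^esup> ds \<integral>\<langle>s\<rangle>\<^bsup>-2b\<^sub>2\<^esup> ds\<close>. What remains is
  \<open>\<lambda>\<^sup>-\<^sup>1 \<Sum>\<^bsub>q\<^sub>1 \<in> \<int>/\<lambda>\<^esub> \<langle>q\<^sub>1\<rangle>\<^bsup>-1-2\<epsilon>\<^esup>\<close>, a Riemann sum which for \<open>\<lambda> \<ge> 1\<close> is at most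
  \<open>2\<^bsup>1+2\<epsilon>\<^esup> \<integral>\<langle>\<eta>\<rangle>\<^bsup>-1-2\<epsilon>\<^esup> d\<eta>\<close>.
\<close>

lemma japanese_ge_one: "japanese y \<ge> 1"
  unfolding japanese_def by simp

lemma japanese_ge_abs: "japanese y \<ge> \<bar>y\<bar>"
  unfolding japanese_def by (simp add: real_le_rsqrt)

lemma japanese_pos: "japanese y > 0"
  using japanese_ge_one[of y] by linarith

lemma japanese_nonzero [simp]: "japanese y \<noteq> 0"
  using japanese_pos[of y] by simp

lemma japanese2_nonzero [simp]: "japanese2 x y \<noteq> 0"
proof -
  have "0 < 1 + x\<^sup>2 + y\<^sup>2" by (intro add_pos_nonneg) auto
  then show ?thesis unfolding japanese2_def by simp
qed

lemma japanese_le_add_abs: "japanese y \<le> japanese t + \<bar>y - t\<bar>"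
proof -
  have "norm ((1::real), y) \<le> norm ((1::real), t) + norm ((0::real), y - t)"
    using norm_triangle_ineq[of "(1::real, t)" "(0, y - t)"] by simp
  then show ?thesis
    by (simp add: japanese_def norm_Pair)
qed

lemma japanese_measurable [measurable]: "japanese \<in> borel_measurable borel"
  unfolding japanese_def by measurable

lemma phase_measurable [measurable (raw)]:
  assumes [measurable]: "f \<in> borel_measurable M" "g \<in> borel_measurable M"
  shows "(\<lambda>x. phase (f x) (g x)) \<in> borel_measurable M"
  unfolding phase_def by measurable

section \<open>Weighted integrals on the line\<close>

lemma nn_integral_square_substitution_le:
  fixes B :: "real \<Rightarrow> ennreal" and a :: real
  assumes [measurable]: "B \<in> borel_measurable borel" and a: "a > 0"
  shows "(\<integral>\<^sup>+u. B (a * u\<^sup>2) * ennreal (2 * a * u) * indicator {0..} u \<partial>lborel) \<le> (\<integral>\<^sup>+x. B x \<partial>lborel)"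
proof -
  let ?F = "\<lambda>n u. B (a * u\<^sup>2) * ennreal (2 * a * u) * indicator {0..real n} u"
  have inc: "incseq ?F"
    by (auto simp: incseq_def le_fun_def intro!: mult_left_mono split: split_indicator)
  have "(SUP n. (indicator {0..real n} u :: ennreal)) = indicator {0..} u" for u :: real
  proof (cases "u \<ge> 0")
    case True
    obtain n where "u \<le> real n" using real_arch_simple by blast
    with True show ?thesis
      by (intro antisym SUP_upper2[of n]) (auto intro!: SUP_least split: split_indicator)
  qed auto
  then have SUP_F: "(SUP n. ?F n u) = B (a * u\<^sup>2) * ennreal (2 * a * u) * indicator {0..} u" for u
    by (simp add: SUP_mult_left_ennreal[symmetric])
  have "(\<integral>\<^sup>+u. B (a * u\<^sup>2) * ennreal (2 * a * u) * indicator {0..} u \<partial>lborel) = (SUP n. integral\<^sup>N lborel (?F n))"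
    by (subst nn_integral_monotone_convergence_SUP[OF inc, symmetric]) (auto simp: SUP_F)
  also have "\<dots> \<le> (\<integral>\<^sup>+x. B x \<partial>lborel)"
  proof (rule SUP_least)
    fix n :: nat
    show "integral\<^sup>N lborel (?F n) \<le> (\<integral>\<^sup>+x. B x \<partial>lborel)"
    proof (cases "n = 0")
      case True
      then have "?F n = (\<lambda>_. 0)" by (auto split: split_indicator)
      then show ?thesis by simp
    next
      case False
      have "integral\<^sup>N lborel (?F n) = (\<integral>\<^sup>+x. B x * indicator {a * 0\<^sup>2..a * (real n)\<^sup>2} x \<partial>lborel)"
        using a False
        by (intro nn_integral_substitution_aux[where g="\<lambda>u. a * u\<^sup>2" and g'="\<lambda>u. 2 * a * u", symmetric])
           (auto intro!: derivative_eq_intros continuous_intros)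
      also have "\<dots> \<le> (\<integral>\<^sup>+x. B x \<partial>lborel)"
        by (intro nn_integral_mono) (auto split: split_indicator)
      finally show ?thesis .
    qed
  qed
  finally show ?thesis .
qed

lemma nn_integral_reflect:
  fixes h :: "real \<Rightarrow> ennreal"
  assumes "h \<in> borel_measurable borel"
  shows "(\<integral>\<^sup>+x. h (- x) \<partial>lborel) = (\<integral>\<^sup>+x. h x \<partial>lborel)"
  using nn_integral_real_affine[OF assms, of "-1" 0] by simp

lemma nn_integral_quadratic_substitution_le:
  fixes B :: "real \<Rightarrow> ennreal" and \<alpha> \<beta> \<gamma> :: real
  assumes [measurable]: "B \<in> borel_measurable borel"
  shows "(\<integral>\<^sup>+x. ennreal \<bar>2 * \<alpha> * x + \<beta>\<bar> * B (\<alpha> * x\<^sup>2 + \<beta> * x + \<gamma>) \<partial>lborel) \<le> 2 * (\<integral>\<^sup>+x. B x \<partial>lborel)"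
proof (cases "\<alpha> = 0")
  case True
  have "(\<integral>\<^sup>+x. ennreal \<bar>\<beta>\<bar> * B (\<beta> * x + \<gamma>) \<partial>lborel) \<le> (\<integral>\<^sup>+x. B x \<partial>lborel)"
  proof (cases "\<beta> = 0")
    case False
    then show ?thesis
      using nn_integral_real_affine[OF assms False, of \<gamma>]
      by (simp add: nn_integral_cmult ac_simps)
  qed simp
  also have "\<dots> \<le> 2 * (\<integral>\<^sup>+x. B x \<partial>lborel)"
    using mult_right_mono[of "1::ennreal" 2] by simp
  finally show ?thesis using True by simp
next
  case False
  define x0 where "x0 = - \<beta> / (2 * \<alpha>)"
  define \<gamma>' where "\<gamma>' = \<gamma> - \<beta>\<^sup>2 / (4 * \<alpha>)"
  define s :: real where "s = sgn \<alpha>"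
  define a where "a = \<bar>\<alpha>\<bar>"
  have a: "a > 0" and s: "s \<noteq> 0" "\<bar>s\<bar> = 1"
    using False by (auto simp: a_def s_def sgn_if)
  define G where "G u = B (\<gamma>' + s * (a * u\<^sup>2)) * ennreal (2 * a * u) * indicator {0..} u" for u
  have [measurable]: "G \<in> borel_measurable borel" unfolding G_def by measurable
  have completed_square: "ennreal \<bar>2 * \<alpha> * (x0 + u) + \<beta>\<bar> * B (\<alpha> * (x0 + u)\<^sup>2 + \<beta> * (x0 + u) + \<gamma>)
      = ennreal (2 * a * \<bar>u\<bar>) * B (\<gamma>' + s * (a * u\<^sup>2))" for u
  proof -
    have "\<bar>2 * \<alpha> * (x0 + u) + \<beta>\<bar> = 2 * a * \<bar>u\<bar>"
      using False unfolding x0_def a_def by (simp add: field_simps abs_mult)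
    moreover have "\<alpha> * (x0 + u)\<^sup>2 + \<beta> * (x0 + u) + \<gamma> = \<gamma>' + s * (a * u\<^sup>2)"
      using False unfolding x0_def \<gamma>'_def s_def a_def
      by (simp add: field_simps power2_eq_square abs_mult_sgn)
    ultimately show ?thesis by simp
  qed
  have "(\<integral>\<^sup>+x. ennreal \<bar>2 * \<alpha> * x + \<beta>\<bar> * B (\<alpha> * x\<^sup>2 + \<beta> * x + \<gamma>) \<partial>lborel)
      = (\<integral>\<^sup>+u. ennreal (2 * a * \<bar>u\<bar>) * B (\<gamma>' + s * (a * u\<^sup>2)) \<partial>lborel)"
    using nn_integral_real_affine[of "\<lambda>x. ennreal \<bar>2 * \<alpha> * x + \<beta>\<bar> * B (\<alpha> * x\<^sup>2 + \<beta> * x + \<gamma>)" 1 x0]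
    by (simp add: completed_square)
  also have "\<dots> \<le> (\<integral>\<^sup>+u. G u + G (- u) \<partial>lborel)"
    by (intro nn_integral_mono) (auto simp: G_def mult.commute split: split_indicator)
  also have "\<dots> = 2 * (\<integral>\<^sup>+u. G u \<partial>lborel)"
    by (simp add: nn_integral_add nn_integral_reflect mult_2)
  also have "(\<integral>\<^sup>+u. G u \<partial>lborel) \<le> (\<integral>\<^sup>+y. B (\<gamma>' + s * y) \<partial>lborel)"
    unfolding G_def by (rule nn_integral_square_substitution_le[OF _ a]) measurable
  also have "\<dots> = (\<integral>\<^sup>+x. B x \<partial>lborel)"
    using nn_integral_real_affine[OF assms s(1), of \<gamma>'] s(2) by simp
  finally show ?thesis by (simp add: mult_left_mono)
qed

lemma nn_integral_japanese_powr_finite: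
  fixes s :: real assumes s: "s > 1"
  shows "(\<integral>\<^sup>+y. ennreal (japanese y powr (-s)) \<partial>lborel) < \<infinity>"
proof -
  define h where "h y = ennreal (indicator {1..} y * y powr (-s))" for y :: real
  have [measurable]: "h \<in> borel_measurable borel" unfolding h_def by measurable
  have h_integral: "(\<integral>\<^sup>+y. h y \<partial>lborel) = ennreal (1 / (s - 1))"
  proof -
    have "((\<lambda>x. x powr (-s)) has_integral -(1 powr (-s+1)) / (-s+1)) {1..}"
      by (rule has_integral_powr_to_inf) (use s in auto)
    then have "(\<integral>\<^sup>+x. ennreal (indicator {1..} x * x powr (-s)) \<partial>lborel) = -(1 powr (-s+1)) / (-s+1)"
      by (intro nn_integral_has_integral_lebesgue) auto
    moreover have "-(1 powr (-s+1)) / (-s+1) = 1 / (s - 1)" using s by (simp add: field_simps)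
    ultimately show ?thesis unfolding h_def by simp
  qed
  have "ennreal (japanese y powr (-s)) \<le> indicator {-1..1} y + h y + h (- y)" for y
  proof -
    consider "\<bar>y\<bar> \<le> 1" | "y > 1" | "y < -1" by linarith
    then show ?thesis
    proof cases
      case 1
      have "japanese y powr (-s) \<le> 1"
        using japanese_ge_one[of y] s by (simp add: powr_minus divide_simps ge_one_powr_ge_zero)
      with 1 have "ennreal (japanese y powr (-s)) \<le> indicator {-1..1} y"
        by (auto simp: indicator_def)
      then show ?thesis by (simp add: add_increasing2)
    next
      case 2
      have "japanese y powr (-s) \<le> y powr (-s)"
        using 2 japanese_ge_abs[of y] s by (intro powr_mono2') auto
      with 2 show ?thesis by (simp add: h_def add_increasing add_increasing2)
    next
      case 3
      have "japanese y powr (-s) \<le> (-y) powr (-s)"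
        using 3 japanese_ge_abs[of y] s by (intro powr_mono2') auto
      with 3 show ?thesis by (simp add: h_def add_increasing)
    qed
  qed
  then have "(\<integral>\<^sup>+y. ennreal (japanese y powr (-s)) \<partial>lborel)
      \<le> (\<integral>\<^sup>+y. indicator {-1..1} y + h y + h (- y) \<partial>lborel)"
    by (intro nn_integral_mono)
  also have "\<dots> = ennreal 2 + 2 * ennreal (1 / (s - 1))"
    by (simp add: nn_integral_add nn_integral_reflect h_integral mult_2 add.assoc)
  finally show ?thesis
    by (simp add: order_le_less_trans ennreal_mult_less_top)
qed

definition decay_integral :: "real \<Rightarrow> ennreal" where
  "decay_integral b = (\<integral>\<^sup>+x. ennreal (japanese x powr (-(2 * b))) \<partial>lborel)"

lemma decay_integral_finite: "b > 1/2 \<Longrightarrow> decay_integral b < \<infinity>"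
  unfolding decay_integral_def by (rule nn_integral_japanese_powr_finite) simp

section \<open>Riemann sums over \<open>\<int>/\<lambda>\<close>\<close>

lemma lattice_eq_range: "lam \<noteq> 0 \<Longrightarrow> lattice lam = range (\<lambda>k::int. of_int k / lam)"
  unfolding lattice_def by auto

lemma countable_lattice: "lam \<noteq> 0 \<Longrightarrow> countable (lattice lam)"
  by (simp add: lattice_eq_range)

lemma lattice_diff: "x \<in> lattice lam \<Longrightarrow> y \<in> lattice lam \<Longrightarrow> x - y \<in> lattice lam"
  unfolding lattice_def by (auto, metis diff_divide_distrib of_int_diff)

lemma lattice_add: "x \<in> lattice lam \<Longrightarrow> y \<in> lattice lam \<Longrightarrow> x + y \<in> lattice lam"
  unfolding lattice_def by (auto, metis add_divide_distrib of_int_add)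

definition lattice_floor :: "real \<Rightarrow> real \<Rightarrow> real" where
  "lattice_floor lam y = of_int \<lfloor>lam * y\<rfloor> / lam"

lemma lattice_floor_vimage:
  fixes lam :: real assumes lam: "lam > 0"
  shows "lattice_floor lam -` {of_int k / lam} = {of_int k / lam ..< (of_int k + 1) / lam}"
proof (rule set_eqI)
  fix y
  have "lattice_floor lam y = of_int k / lam \<longleftrightarrow> \<lfloor>lam * y\<rfloor> = k"
    using lam by (simp add: lattice_floor_def divide_cancel_right)
  also have "\<dots> \<longleftrightarrow> of_int k / lam \<le> y \<and> y < (of_int k + 1) / lam"
    using lam by (simp add: floor_eq_iff pos_divide_le_eq pos_less_divide_eq mult.commute)
  finally show "y \<in> lattice_floor lam -` {of_int k / lam} \<longleftrightarrow> y \<in> {of_int k / lam ..< (of_int k + 1) / lam}"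
    by simp
qed

lemma lattice_floor_measurable:
  fixes lam :: real assumes lam: "lam > 0"
  shows "lattice_floor lam \<in> lborel \<rightarrow>\<^sub>M count_space (lattice lam)"
proof (subst measurable_count_space_eq_countable)
  show "countable (lattice lam)" using lam by (simp add: countable_lattice)
  show "lattice_floor lam \<in> space lborel \<rightarrow> lattice lam \<and>
      (\<forall>a\<in>lattice lam. lattice_floor lam -` {a} \<inter> space lborel \<in> sets lborel)"
    by (auto simp: lattice_def lattice_floor_vimage[OF lam]) (auto simp: lattice_floor_def)
qed

lemma distr_lattice_floor:
  fixes lam :: real assumes lam: "lam > 0"
  shows "distr lborel (count_space (lattice lam)) (lattice_floor lam)
       = scale_measure (ennreal (1 / lam)) (count_space (lattice lam))"
proof (rule measure_eqI_countable)
  show "countable (lattice lam)" using lam by (simp add: countable_lattice)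
  fix a assume a: "a \<in> lattice lam"
  then obtain k :: int where k: "a = of_int k / lam" unfolding lattice_def by auto
  have "emeasure (distr lborel (count_space (lattice lam)) (lattice_floor lam)) {a}
      = emeasure lborel {of_int k / lam ..< (of_int k + 1) / lam}"
    using a by (subst emeasure_distr[OF lattice_floor_measurable[OF lam]]) (auto simp: k lattice_floor_vimage[OF lam])
  also have "\<dots> = ennreal (1 / lam)"
    using lam by (simp add: divide_simps)
  finally show "emeasure (distr lborel (count_space (lattice lam)) (lattice_floor lam)) {a}
      = emeasure (scale_measure (ennreal (1 / lam)) (count_space (lattice lam))) {a}"
    using a by simp
qed simp_all

lemma lattice_floor_dist:
  fixes lam :: real assumes lam: "lam \<ge> 1"
  shows "\<bar>y - lattice_floor lam y\<bar> \<le> 1"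
proof -
  define d where "d = y - lattice_floor lam y"
  have "d * lam = lam * y - of_int \<lfloor>lam * y\<rfloor>"
    using lam by (simp add: d_def lattice_floor_def field_simps)
  moreover have "of_int \<lfloor>lam * y\<rfloor> \<le> lam * y" "lam * y < of_int \<lfloor>lam * y\<rfloor> + 1"
    by linarith+
  ultimately have "0 \<le> d * lam" "d * lam \<le> 1 * lam"
    using lam by linarith+
  then have "0 \<le> d" "d \<le> 1"
    using lam by (simp_all add: zero_le_mult_iff mult_le_cancel_right)
  then show ?thesis by (simp add: d_def)
qed

lemma lattice_sum_japanese_powr_le:
  fixes lam s :: real assumes lam: "lam \<ge> 1" and s: "s > 0"
  shows "ennreal (1 / lam) * (\<integral>\<^sup>+q. ennreal (japanese q powr (-s)) \<partial>count_space (lattice lam))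
     \<le> ennreal (2 powr s) * (\<integral>\<^sup>+y. ennreal (japanese y powr (-s)) \<partial>lborel)"
proof -
  have lam0: "lam > 0" using lam by simp
  have "ennreal (1 / lam) * (\<integral>\<^sup>+q. ennreal (japanese q powr (-s)) \<partial>count_space (lattice lam))
      = (\<integral>\<^sup>+q. ennreal (japanese q powr (-s)) \<partial>distr lborel (count_space (lattice lam)) (lattice_floor lam))"
    by (simp add: distr_lattice_floor[OF lam0] nn_integral_scale_measure)
  also have "\<dots> = (\<integral>\<^sup>+y. ennreal (japanese (lattice_floor lam y) powr (-s)) \<partial>lborel)"
    by (rule nn_integral_distr[OF lattice_floor_measurable[OF lam0]]) simp
  also have "\<dots> \<le> (\<integral>\<^sup>+y. ennreal (2 powr s) * ennreal (japanese y powr (-s)) \<partial>lborel)"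
  proof (rule nn_integral_mono)
    fix y :: real
    have "japanese y \<le> 2 * japanese (lattice_floor lam y)"
      using japanese_le_add_abs[of y "lattice_floor lam y"] lattice_floor_dist[OF lam, of y]
        japanese_ge_one[of "lattice_floor lam y"] by linarith
    then have "japanese (lattice_floor lam y) powr (-s) \<le> (japanese y / 2) powr (-s)"
      using s japanese_pos[of y] by (intro powr_mono2') auto
    also have "\<dots> = 2 powr s * japanese y powr (-s)"
      using japanese_pos[of y] by (simp add: powr_divide powr_minus divide_simps)
    finally show "ennreal (japanese (lattice_floor lam y) powr (-s)) \<le> ennreal (2 powr s) * ennreal (japanese y powr (-s))"
      by (simp add: ennreal_mult[symmetric])
  qed
  also have "\<dots> = ennreal (2 powr s) * (\<integral>\<^sup>+y. ennreal (japanese y powr (-s)) \<partial>lborel)"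
    by (rule nn_integral_cmult) measurable
  finally show ?thesis .
qed

section \<open>The resonance integral\<close>

lemma phase_sum_quadratic:
  "phase \<xi>1 q1 + phase (\<xi> - \<xi>1) q2
     = - ((-3 * \<xi>) * \<xi>1\<^sup>2 + (3 * \<xi>\<^sup>2 - q1\<^sup>2 + q2\<^sup>2) * \<xi>1) + \<xi> ^ 3 + \<xi> * q2\<^sup>2"
  unfolding phase_def by (simp add: power2_eq_square power3_eq_cube algebra_simps)

lemma kernel_eq_abs_resonance_derivative:
  fixes \<xi> \<xi>1 q1 q2 :: real
  shows "\<bar>(3 * \<xi>1\<^sup>2 + q1\<^sup>2) - (3 * (\<xi> - \<xi>1)\<^sup>2 + q2\<^sup>2)\<bar> = \<bar>2 * (-3 * \<xi>) * \<xi>1 + (3 * \<xi>\<^sup>2 - q1\<^sup>2 + q2\<^sup>2)\<bar>"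
  by (rule abs_minus_commute[THEN trans], rule arg_cong[where f=abs]) (simp add: power2_eq_square algebra_simps)

lemma resonance_integral_le:
  fixes A B :: "real \<Rightarrow> ennreal" and \<tau> \<xi> q1 q2 :: real
  assumes [measurable]: "A \<in> borel_measurable borel" "B \<in> borel_measurable borel"
  shows "(\<integral>\<^sup>+\<xi>1. \<integral>\<^sup>+\<tau>1. ennreal \<bar>(3 * \<xi>1\<^sup>2 + q1\<^sup>2) - (3 * (\<xi> - \<xi>1)\<^sup>2 + q2\<^sup>2)\<bar>
            * A (\<tau>1 - phase \<xi>1 q1) * B (\<tau> - \<tau>1 - phase (\<xi> - \<xi>1) q2) \<partial>lborel \<partial>lborel)
         \<le> 2 * (\<integral>\<^sup>+x. A x \<partial>lborel) * (\<integral>\<^sup>+x. B x \<partial>lborel)"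
proof -
  define c where "c \<xi>1 = ennreal \<bar>(3 * \<xi>1\<^sup>2 + q1\<^sup>2) - (3 * (\<xi> - \<xi>1)\<^sup>2 + q2\<^sup>2)\<bar>" for \<xi>1
  define R where "R \<xi>1 = phase \<xi>1 q1 + phase (\<xi> - \<xi>1) q2" for \<xi>1
  have [measurable]: "c \<in> borel_measurable borel" "R \<in> borel_measurable borel"
    unfolding c_def[abs_def] R_def[abs_def] by measurable
  have shift: "(\<integral>\<^sup>+\<tau>1. c \<xi>1 * A (\<tau>1 - phase \<xi>1 q1) * B (\<tau> - \<tau>1 - phase (\<xi> - \<xi>1) q2) \<partial>lborel)
      = (\<integral>\<^sup>+s. c \<xi>1 * A s * B (\<tau> - s - R \<xi>1) \<partial>lborel)" for \<xi>1
    using nn_integral_real_affine[of "\<lambda>\<tau>1. c \<xi>1 * A (\<tau>1 - phase \<xi>1 q1) * B (\<tau> - \<tau>1 - phase (\<xi> - \<xi>1) q2)" 1 "phase \<xi>1 q1"]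
    by (simp add: R_def algebra_simps)
  have inner: "(\<integral>\<^sup>+\<xi>1. c \<xi>1 * B (\<tau> - s - R \<xi>1) \<partial>lborel) \<le> 2 * (\<integral>\<^sup>+x. B x \<partial>lborel)" for s
    using nn_integral_quadratic_substitution_le[of B "-3 * \<xi>" "3 * \<xi>\<^sup>2 - q1\<^sup>2 + q2\<^sup>2" "\<tau> - s - \<xi> ^ 3 - \<xi> * q2\<^sup>2"]
    unfolding c_def R_def phase_sum_quadratic kernel_eq_abs_resonance_derivative
    by (simp add: algebra_simps)
  have "(\<integral>\<^sup>+\<xi>1. \<integral>\<^sup>+\<tau>1. ennreal \<bar>(3 * \<xi>1\<^sup>2 + q1\<^sup>2) - (3 * (\<xi> - \<xi>1)\<^sup>2 + q2\<^sup>2)\<bar>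
            * A (\<tau>1 - phase \<xi>1 q1) * B (\<tau> - \<tau>1 - phase (\<xi> - \<xi>1) q2) \<partial>lborel \<partial>lborel)
      = (\<integral>\<^sup>+\<xi>1. \<integral>\<^sup>+s. c \<xi>1 * A s * B (\<tau> - s - R \<xi>1) \<partial>lborel \<partial>lborel)"
    unfolding c_def[symmetric] shift ..
  also have "\<dots> = (\<integral>\<^sup>+s. \<integral>\<^sup>+\<xi>1. c \<xi>1 * A s * B (\<tau> - s - R \<xi>1) \<partial>lborel \<partial>lborel)"
    by (rule lborel_pair.Fubini'[symmetric]) measurable
  also have "\<dots> = (\<integral>\<^sup>+s. A s * (\<integral>\<^sup>+\<xi>1. c \<xi>1 * B (\<tau> - s - R \<xi>1) \<partial>lborel) \<partial>lborel)"
    by (rule nn_integral_cong, subst nn_integral_cmult[symmetric]) (auto simp: ac_simps)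
  also have "\<dots> \<le> (\<integral>\<^sup>+s. A s * (2 * (\<integral>\<^sup>+x. B x \<partial>lborel)) \<partial>lborel)"
    by (intro nn_integral_mono mult_left_mono inner) simp
  also have "\<dots> = 2 * (\<integral>\<^sup>+x. A x \<partial>lborel) * (\<integral>\<^sup>+x. B x \<partial>lborel)"
    by (subst nn_integral_multc) (auto simp: ac_simps)
  finally show ?thesis .
qed

section \<open>Shift-invariant measures and convolution\<close>

definition shift_invariant :: "'a::ab_group_add measure \<Rightarrow> bool" where
  "shift_invariant M \<longleftrightarrow>
     (\<lambda>x. fst x - snd x) \<in> M \<Otimes>\<^sub>M M \<rightarrow>\<^sub>M M \<and> (\<forall>a\<in>space M. distr M M (\<lambda>x. x - a) = M)"

lemma shift_invariant_measurable_diff: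
  "shift_invariant M \<Longrightarrow> (\<lambda>x. fst x - snd x) \<in> M \<Otimes>\<^sub>M M \<rightarrow>\<^sub>M M"
  unfolding shift_invariant_def by blast

lemma shift_invariant_measurable_shift:
  "shift_invariant M \<Longrightarrow> a \<in> space M \<Longrightarrow> (\<lambda>x. x - a) \<in> M \<rightarrow>\<^sub>M M"
  using measurable_comp[OF measurable_Pair2'[of a M M] shift_invariant_measurable_diff]
  by (simp add: comp_def)

lemma shift_invariant_distr:
  "shift_invariant M \<Longrightarrow> a \<in> space M \<Longrightarrow> distr M M (\<lambda>x. x - a) = M"
  unfolding shift_invariant_def by blast

lemma shift_invariant_nn_integral:
  assumes M: "shift_invariant M" and a: "a \<in> space M" and [measurable]: "H \<in> borel_measurable M"
  shows "(\<integral>\<^sup>+z. H (z - a) \<partial>M) = (\<integral>\<^sup>+z. H z \<partial>M)"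
proof -
  have "(\<integral>\<^sup>+z. H (z - a) \<partial>M) = (\<integral>\<^sup>+z. H z \<partial>distr M M (\<lambda>x. x - a))"
    by (rule nn_integral_distr[OF shift_invariant_measurable_shift[OF M a], symmetric]) simp
  then show ?thesis
    by (simp add: shift_invariant_distr[OF M a])
qed

lemma shift_invariant_lborel: "shift_invariant (lborel :: real measure)"
  unfolding shift_invariant_def
proof
  show "(\<lambda>x. fst x - snd x) \<in> (lborel :: real measure) \<Otimes>\<^sub>M lborel \<rightarrow>\<^sub>M lborel"
    by measurable
  show "\<forall>a\<in>space lborel. distr lborel lborel (\<lambda>x. x - a) = (lborel :: real measure)"
  proof
    fix a :: real
    have "distr lborel lborel (\<lambda>x. x - a) = distr lborel borel ((+) (- a))"
      by (rule distr_cong) auto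
    then show "distr lborel lborel (\<lambda>x. x - a) = lborel"
      using lborel_distr_plus[of "- a"] by simp
  qed
qed

lemma shift_invariant_lattice:
  assumes lam: "lam \<noteq> 0"
  shows "shift_invariant (count_space (lattice lam))"
  unfolding shift_invariant_def
proof
  have countable: "countable (lattice lam)"
    using lam by (rule countable_lattice)
  show "(\<lambda>x. fst x - snd x) \<in> count_space (lattice lam) \<Otimes>\<^sub>M count_space (lattice lam) \<rightarrow>\<^sub>M count_space (lattice lam)"
    unfolding pair_measure_countable[OF countable countable] by (auto intro: lattice_diff)
  show "\<forall>a\<in>space (count_space (lattice lam)). distr (count_space (lattice lam)) (count_space (lattice lam)) (\<lambda>x. x - a) = count_space (lattice lam)"
  proof
    fix a assume "a \<in> space (count_space (lattice lam))"
    then have "bij_betw (\<lambda>x. x - a) (lattice lam) (lattice lam)"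
      by (intro bij_betwI[where g="\<lambda>x. x + a"]) (auto intro: lattice_diff lattice_add)
    then show "distr (count_space (lattice lam)) (count_space (lattice lam)) (\<lambda>x. x - a) = count_space (lattice lam)"
      by (rule distr_bij_count_space)
  qed
qed

lemma shift_invariant_pair_measure:
  fixes M1 :: "'a::ab_group_add measure" and M2 :: "'b::ab_group_add measure"
  assumes M1: "shift_invariant M1" and M2: "shift_invariant M2" and "sigma_finite_measure M2"
  shows "shift_invariant (M1 \<Otimes>\<^sub>M M2)"
  unfolding shift_invariant_def
proof
  let ?M = "M1 \<Otimes>\<^sub>M M2"
  have "(\<lambda>x. (fst (fst x), fst (snd x))) \<in> ?M \<Otimes>\<^sub>M ?M \<rightarrow>\<^sub>M M1 \<Otimes>\<^sub>M M1"
    and "(\<lambda>x. (snd (fst x), snd (snd x))) \<in> ?M \<Otimes>\<^sub>M ?M \<rightarrow>\<^sub>M M2 \<Otimes>\<^sub>M M2"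
    by measurable
  from measurable_comp[OF this(1) shift_invariant_measurable_diff[OF M1]]
    measurable_comp[OF this(2) shift_invariant_measurable_diff[OF M2]]
  have "(\<lambda>x. (fst (fst x) - fst (snd x), snd (fst x) - snd (snd x))) \<in> ?M \<Otimes>\<^sub>M ?M \<rightarrow>\<^sub>M ?M"
    by (intro measurable_Pair) (simp_all add: comp_def)
  then show "(\<lambda>x. fst x - snd x) \<in> ?M \<Otimes>\<^sub>M ?M \<rightarrow>\<^sub>M ?M"
    by (simp add: minus_prod_def case_prod_beta')
  show "\<forall>a\<in>space ?M. distr ?M ?M (\<lambda>x. x - a) = ?M"
  proof
    fix a assume "a \<in> space ?M"
    then have a: "fst a \<in> space M1" "snd a \<in> space M2"
      by (auto simp: space_pair_measure)
    have shift_eq: "(\<lambda>x. x - a) = (\<lambda>(x, y). (x - fst a, y - snd a))"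
      by (auto simp: fun_eq_iff prod_eq_iff)
    have "distr ?M ?M (\<lambda>x. x - a) = distr M1 M1 (\<lambda>x. x - fst a) \<Otimes>\<^sub>M distr M2 M2 (\<lambda>y. y - snd a)"
      unfolding shift_eq using assms a
      by (intro pair_measure_distr[symmetric] shift_invariant_measurable_shift) (simp_all add: shift_invariant_distr)
    also have "\<dots> = ?M"
      using M1 M2 a by (simp add: shift_invariant_distr)
    finally show "distr ?M ?M (\<lambda>x. x - a) = ?M" .
  qed
qed

lemma sigma_finite_scale_measure:
  assumes "sigma_finite_measure M" "r \<noteq> \<infinity>"
  shows "sigma_finite_measure (scale_measure r M)"
proof -
  interpret sigma_finite_measure M by fact
  obtain A where A: "countable A" "A \<subseteq> sets M" "\<Union>A = space M" "\<forall>a\<in>A. emeasure M a \<noteq> \<infinity>"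
    using sigma_finite_countable by metis
  show ?thesis
    by standard (rule exI[of _ A], use A assms(2) in \<open>auto simp: space_scale_measure ennreal_mult_eq_top_iff\<close>)
qed

lemma shift_invariant_scale_measure:
  assumes M: "shift_invariant M"
  shows "shift_invariant (scale_measure r M)"
  unfolding shift_invariant_def
proof
  have sets_pair: "sets (scale_measure r M \<Otimes>\<^sub>M scale_measure r M) = sets (M \<Otimes>\<^sub>M M)"
    by (rule sets_pair_measure_cong) simp_all
  show "(\<lambda>x. fst x - snd x) \<in> scale_measure r M \<Otimes>\<^sub>M scale_measure r M \<rightarrow>\<^sub>M scale_measure r M"
    unfolding measurable_cong_sets[OF sets_pair sets_scale_measure] by (rule shift_invariant_measurable_diff[OF M])
  show "\<forall>a\<in>space (scale_measure r M). distr (scale_measure r M) (scale_measure r M) (\<lambda>x. x - a) = scale_measure r M"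
  proof
    fix a assume "a \<in> space (scale_measure r M)"
    then have a: "a \<in> space M" by (simp add: space_scale_measure)
    note shift = shift_invariant_measurable_shift[OF M a]
    show "distr (scale_measure r M) (scale_measure r M) (\<lambda>x. x - a) = scale_measure r M"
    proof (rule measure_eqI)
      fix A assume "A \<in> sets (distr (scale_measure r M) (scale_measure r M) (\<lambda>x. x - a))"
      then have A: "A \<in> sets M" by simp
      have "emeasure (distr (scale_measure r M) (scale_measure r M) (\<lambda>x. x - a)) A
          = r * emeasure M ((\<lambda>x. x - a) -` A \<inter> space M)"
        using A shift by (subst emeasure_distr) (simp_all add: space_scale_measure)
      also have "\<dots> = r * emeasure (distr M M (\<lambda>x. x - a)) A"
        using A shift by (simp add: emeasure_distr)
      finally show "emeasure (distr (scale_measure r M) (scale_measure r M) (\<lambda>x. x - a)) A = emeasure (scale_measure r M) A"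
        by (simp add: shift_invariant_distr[OF M a])
    qed simp
  qed
qed

lemma Cauchy_Schwarz_nn_integral_weighted:
  fixes K W1 W2 F G :: "'a \<Rightarrow> real"
  assumes [measurable]: "K \<in> borel_measurable M" "W1 \<in> borel_measurable M" "W2 \<in> borel_measurable M"
      "F \<in> borel_measurable M" "G \<in> borel_measurable M"
    and W: "\<And>x. W1 x > 0" "\<And>x. W2 x > 0" and FG: "\<And>x. F x \<ge> 0" "\<And>x. G x \<ge> 0"
  shows "(\<integral>\<^sup>+x. ennreal (\<bar>K x\<bar> * F x * G x) \<partial>M)\<^sup>2
      \<le> (\<integral>\<^sup>+x. ennreal ((K x)\<^sup>2 / (W1 x * W2 x)) \<partial>M)
        * (\<integral>\<^sup>+x. ennreal (W1 x * (F x)\<^sup>2) * ennreal (W2 x * (G x)\<^sup>2) \<partial>M)"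
proof -
  define a where "a x = ennreal (\<bar>K x\<bar> / sqrt (W1 x * W2 x))" for x
  define b where "b x = ennreal (sqrt (W1 x * W2 x) * (F x * G x))" for x
  have [measurable]: "a \<in> borel_measurable M" "b \<in> borel_measurable M"
    unfolding a_def[abs_def] b_def[abs_def] by measurable
  have "ennreal (\<bar>K x\<bar> * F x * G x) = a x * b x" for x
    using W[of x] FG[of x] by (simp add: a_def b_def ennreal_mult[symmetric])
  moreover have "(a x)\<^sup>2 = ennreal ((K x)\<^sup>2 / (W1 x * W2 x))"
    and "(b x)\<^sup>2 = ennreal (W1 x * (F x)\<^sup>2) * ennreal (W2 x * (G x)\<^sup>2)" for x
    using W[of x] FG[of x]
    by (simp_all add: a_def b_def ennreal_power power_divide power_mult_distrib ennreal_mult[symmetric] ac_simps)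
  ultimately show ?thesis
    using Cauchy_Schwarz_nn_integral[of a M b] by simp
qed

lemma norm_integral_sq_le_nn_integral_norm_sq:
  "ennreal ((norm (integral\<^sup>L M f))\<^sup>2) \<le> (\<integral>\<^sup>+x. norm (f x) \<partial>M)\<^sup>2"
proof -
  have "ennreal (norm (integral\<^sup>L M f)) \<le> (\<integral>\<^sup>+x. norm (f x) \<partial>M)"
    by (cases "integrable M f") (simp_all add: integral_norm_bound_ennreal not_integrable_integral_eq)
  then show ?thesis
    by (simp add: ennreal_power[symmetric] power_mono)
qed

lemma nn_integral_convolution:
  fixes M :: "'a::ab_group_add measure" and F G :: "'a \<Rightarrow> ennreal"
  assumes "sigma_finite_measure M" and M: "shift_invariant M"
    and [measurable]: "F \<in> borel_measurable M" "G \<in> borel_measurable M"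
  shows "(\<integral>\<^sup>+z. \<integral>\<^sup>+z1. F z1 * G (z - z1) \<partial>M \<partial>M) = (\<integral>\<^sup>+z. F z \<partial>M) * (\<integral>\<^sup>+z. G z \<partial>M)"
proof -
  interpret sigma_finite_measure M by fact
  interpret pair_sigma_finite M M ..
  have [measurable]: "(\<lambda>x. G (fst x - snd x)) \<in> borel_measurable (M \<Otimes>\<^sub>M M)"
    using measurable_comp[OF shift_invariant_measurable_diff[OF M], of G] by (simp add: comp_def)
  have "(\<integral>\<^sup>+z. \<integral>\<^sup>+z1. F z1 * G (z - z1) \<partial>M \<partial>M) = (\<integral>\<^sup>+z1. \<integral>\<^sup>+z. F z1 * G (z - z1) \<partial>M \<partial>M)"
    by (rule Fubini'[symmetric]) measurable
  also have "\<dots> = (\<integral>\<^sup>+z1. F z1 * (\<integral>\<^sup>+z. G z \<partial>M) \<partial>M)"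
  proof (rule nn_integral_cong)
    fix z1 assume z1: "z1 \<in> space M"
    have "(\<lambda>z. G (z - z1)) \<in> borel_measurable M"
      using measurable_Pair1[OF _ z1, of "\<lambda>x. G (fst x - snd x)"] by simp
    then show "(\<integral>\<^sup>+z. F z1 * G (z - z1) \<partial>M) = F z1 * (\<integral>\<^sup>+z. G z \<partial>M)"
      by (simp add: nn_integral_cmult shift_invariant_nn_integral[OF M z1])
  qed
  also have "\<dots> = (\<integral>\<^sup>+z. F z \<partial>M) * (\<integral>\<^sup>+z. G z \<partial>M)"
    by (rule nn_integral_multc) measurable
  finally show ?thesis .
qed

lemma AE_integrable_and_nn_integral_norm_sq_le:
  fixes h :: "'a \<Rightarrow> 'b \<Rightarrow> 'c::{banach, second_countable_topology}"
  assumes h: "\<And>z. z \<in> space M \<Longrightarrow> h z \<in> borel_measurable N"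
    and bound: "\<And>z. z \<in> space M \<Longrightarrow> (\<integral>\<^sup>+y. norm (h z y) \<partial>N)\<^sup>2 \<le> C * S z"
    and C: "C < \<infinity>" and [measurable]: "S \<in> borel_measurable M" and S: "(\<integral>\<^sup>+z. S z \<partial>M) < \<infinity>"
  shows "(AE z in M. integrable N (h z)) \<and>
    (\<integral>\<^sup>+z. ennreal ((norm (integral\<^sup>L N (h z)))\<^sup>2) \<partial>M) \<le> C * (\<integral>\<^sup>+z. S z \<partial>M)"
proof
  have "AE z in M. S z \<noteq> \<infinity>"
    using S by (intro nn_integral_noteq_infinite) simp_all
  then have "AE z in M. (\<integral>\<^sup>+y. norm (h z y) \<partial>N) < \<infinity>"
  proof (rule AE_mp[OF _ AE_I2], intro impI)
    fix z assume z: "z \<in> space M" and "S z \<noteq> \<infinity>"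
    with bound[OF z] C have "(\<integral>\<^sup>+y. norm (h z y) \<partial>N)\<^sup>2 < \<infinity>"
      by (simp add: ennreal_mult_less_top order_le_less_trans less_top)
    then show "(\<integral>\<^sup>+y. norm (h z y) \<partial>N) < \<infinity>"
      by (simp add: power_less_top_ennreal)
  qed
  then show "AE z in M. integrable N (h z)"
    by (elim AE_mp) (auto intro!: AE_I2 integrableI_bounded h)
  have "(\<integral>\<^sup>+z. ennreal ((norm (integral\<^sup>L N (h z)))\<^sup>2) \<partial>M) \<le> (\<integral>\<^sup>+z. C * S z \<partial>M)"
    using bound by (intro nn_integral_mono order_trans[OF norm_integral_sq_le_nn_integral_norm_sq])
  also have "\<dots> = C * (\<integral>\<^sup>+z. S z \<partial>M)"
    by (simp add: nn_integral_cmult)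
  finally show "(\<integral>\<^sup>+z. ennreal ((norm (integral\<^sup>L N (h z)))\<^sup>2) \<partial>M) \<le> C * (\<integral>\<^sup>+z. S z \<partial>M)" .
qed

lemma convolution_bilinear_estimate:
  fixes M :: "'a::ab_group_add measure" and k :: "'a \<Rightarrow> 'a \<Rightarrow> real"
    and w1 w2 :: "'a \<Rightarrow> real" and f g :: "'a \<Rightarrow> complex" and C0 :: ennreal
  assumes sf: "sigma_finite_measure M" and M: "shift_invariant M"
    and [measurable]: "(\<lambda>x. k (fst x) (snd x)) \<in> borel_measurable (M \<Otimes>\<^sub>M M)"
      "w1 \<in> borel_measurable M" "w2 \<in> borel_measurable M" "f \<in> borel_measurable M" "g \<in> borel_measurable M"
    and w1_pos: "\<And>z. w1 z > 0" and w2_pos: "\<And>z. w2 z > 0"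
    and kernel_bound: "\<And>z. z \<in> space M \<Longrightarrow> (\<integral>\<^sup>+z1. ennreal ((k z z1)\<^sup>2 / (w1 z1 * w2 (z - z1))) \<partial>M) \<le> C0"
    and C0: "C0 < \<infinity>"
    and f_fin: "(\<integral>\<^sup>+z. ennreal (w1 z * (cmod (f z))\<^sup>2) \<partial>M) < \<infinity>"
    and g_fin: "(\<integral>\<^sup>+z. ennreal (w2 z * (cmod (g z))\<^sup>2) \<partial>M) < \<infinity>"
  shows "(AE z in M. integrable M (\<lambda>z1. complex_of_real (k z z1) * f z1 * g (z - z1))) \<and>
     (\<integral>\<^sup>+z. ennreal ((cmod (LINT z1|M. complex_of_real (k z z1) * f z1 * g (z - z1)))\<^sup>2) \<partial>M)
       \<le> C0 * (\<integral>\<^sup>+z. ennreal (w1 z * (cmod (f z))\<^sup>2) \<partial>M) * (\<integral>\<^sup>+z. ennreal (w2 z * (cmod (g z))\<^sup>2) \<partial>M)"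
proof -
  interpret sigma_finite_measure M by (rule sf)
  interpret pair_sigma_finite M M ..
  have diff_comp [measurable]: "(\<lambda>x. h (fst x - snd x)) \<in> borel_measurable (M \<Otimes>\<^sub>M M)"
    if "h \<in> borel_measurable M" for h :: "'a \<Rightarrow> 'b::topological_space"
    using measurable_comp[OF shift_invariant_measurable_diff[OF M] that] by (simp add: comp_def)
  define F1 where "F1 z = ennreal (w1 z * (cmod (f z))\<^sup>2)" for z
  define F2 where "F2 z = ennreal (w2 z * (cmod (g z))\<^sup>2)" for z
  define S where "S z = (\<integral>\<^sup>+z1. F1 z1 * F2 (z - z1) \<partial>M)" for z
  have [measurable]: "F1 \<in> borel_measurable M" "F2 \<in> borel_measurable M" "S \<in> borel_measurable M"
    unfolding F1_def[abs_def] F2_def[abs_def] S_def[abs_def] by measurable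
  have S_integral: "(\<integral>\<^sup>+z. S z \<partial>M) = (\<integral>\<^sup>+z. F1 z \<partial>M) * (\<integral>\<^sup>+z. F2 z \<partial>M)"
    unfolding S_def by (rule nn_integral_convolution[OF sf M]; measurable)
  have "(AE z in M. integrable M (\<lambda>z1. complex_of_real (k z z1) * f z1 * g (z - z1))) \<and>
     (\<integral>\<^sup>+z. ennreal ((cmod (LINT z1|M. complex_of_real (k z z1) * f z1 * g (z - z1)))\<^sup>2) \<partial>M)
       \<le> C0 * (\<integral>\<^sup>+z. S z \<partial>M)"
  proof (rule AE_integrable_and_nn_integral_norm_sq_le)
    fix z assume z: "z \<in> space M"
    have [measurable]: "(\<lambda>z1. k z z1) \<in> borel_measurable M"
      using measurable_Pair2[OF _ z, of "\<lambda>x. k (fst x) (snd x)"] by simp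
    have [measurable]: "(\<lambda>z1. h (z - z1)) \<in> borel_measurable M"
      if "h \<in> borel_measurable M" for h :: "'a \<Rightarrow> 'b::topological_space"
      using measurable_Pair2[OF diff_comp[OF that] z] by simp
    show "(\<lambda>z1. complex_of_real (k z z1) * f z1 * g (z - z1)) \<in> borel_measurable M"
      by measurable
    have "(\<integral>\<^sup>+z1. norm (complex_of_real (k z z1) * f z1 * g (z - z1)) \<partial>M)\<^sup>2
        \<le> (\<integral>\<^sup>+z1. ennreal ((k z z1)\<^sup>2 / (w1 z1 * w2 (z - z1))) \<partial>M) * S z"
      unfolding S_def F1_def F2_def using w1_pos w2_pos
      by (simp add: norm_mult mult.assoc) (intro Cauchy_Schwarz_nn_integral_weighted[simplified mult.assoc]; measurable)
    also have "\<dots> \<le> C0 * S z"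
      by (intro mult_right_mono kernel_bound z) simp
    finally show "(\<integral>\<^sup>+z1. norm (complex_of_real (k z z1) * f z1 * g (z - z1)) \<partial>M)\<^sup>2 \<le> C0 * S z" .
  qed (use C0 f_fin g_fin in \<open>simp_all add: S_integral F1_def F2_def ennreal_mult_less_top\<close>)
  then show ?thesis
    by (simp add: S_integral F1_def F2_def mult.assoc)
qed

section \<open>The frequency spaces\<close>

definition X_weight :: "real \<Rightarrow> real \<times> real \<times> real \<Rightarrow> real" where
  "X_weight b z = japanese (fst z - phase (fst (snd z)) (snd (snd z))) powr (2 * b)"

definition XJ_weight :: "real \<Rightarrow> real \<Rightarrow> real \<times> real \<times> real \<Rightarrow> real" where
  "XJ_weight \<sigma> b z = japanese (snd (snd z)) powr (2 * \<sigma>) * X_weight b z"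

lemma X_weight_pos: "X_weight b z > 0"
  by (simp add: X_weight_def)

lemma XJ_weight_pos: "XJ_weight \<sigma> b z > 0"
  by (simp add: XJ_weight_def X_weight_pos)

lemma X_weight_measurable: "X_weight b \<in> borel_measurable (lborel \<Otimes>\<^sub>M lborel \<Otimes>\<^sub>M lborel)"
  unfolding X_weight_def[abs_def] by measurable

lemma XJ_weight_measurable: "XJ_weight \<sigma> b \<in> borel_measurable (lborel \<Otimes>\<^sub>M lborel \<Otimes>\<^sub>M lborel)"
  unfolding XJ_weight_def[abs_def] X_weight_def by measurable

lemma mp_kernel_measurable:
  "(\<lambda>x. mp_kernel (snd x) (fst x - snd x))
     \<in> borel_measurable ((lborel \<Otimes>\<^sub>M lborel \<Otimes>\<^sub>M lborel) \<Otimes>\<^sub>M (lborel \<Otimes>\<^sub>M lborel \<Otimes>\<^sub>M lborel))"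
  unfolding mp_kernel_def by simp measurable

lemma Xsq_eq:
  "Xsq lam 0 b g = (\<integral>\<^sup>+z. ennreal (X_weight b z * (cmod (g z))\<^sup>2) \<partial>freq_measure lam) / ennreal ((2 * pi) ^ 3)"
  unfolding Xsq_def X_weight_def by simp

lemma XJsq_eq:
  "XJsq lam \<sigma> b f = (\<integral>\<^sup>+z. ennreal (XJ_weight \<sigma> b z * (cmod (f z))\<^sup>2) \<partial>freq_measure lam) / ennreal ((2 * pi) ^ 3)"
proof -
  have "(japanese q powr \<sigma>)\<^sup>2 = japanese q powr (2 * \<sigma>)" for q
    by (simp add: power2_eq_square powr_add[symmetric])
  then show ?thesis
    unfolding XJsq_def Xsq_eq XJ_weight_def by (simp add: norm_mult power_mult_distrib ac_simps)
qed

lemma L2sq_eq: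
  "L2sq lam F = (\<integral>\<^sup>+z. ennreal ((cmod (F z))\<^sup>2) \<partial>freq_measure lam) / ennreal ((2 * pi) ^ 3)"
  unfolding L2sq_def Xsq_eq X_weight_def by simp

lemma mp_kernel_weight_quotient:
  "ennreal ((mp_kernel (\<tau>1, \<xi>1, q1) (\<tau> - \<tau>1, \<xi> - \<xi>1, q - q1))\<^sup>2
       / (XJ_weight \<sigma> b1 (\<tau>1, \<xi>1, q1) * X_weight b2 (\<tau> - \<tau>1, \<xi> - \<xi>1, q - q1)))
   = ennreal (japanese q1 powr (-(2 * \<sigma>)))
     * (ennreal \<bar>(3 * \<xi>1\<^sup>2 + q1\<^sup>2) - (3 * (\<xi> - \<xi>1)\<^sup>2 + (q - q1)\<^sup>2)\<bar>
        * ennreal (japanese (\<tau>1 - phase \<xi>1 q1) powr (-(2 * b1)))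
        * ennreal (japanese (\<tau> - \<tau>1 - phase (\<xi> - \<xi>1) (q - q1)) powr (-(2 * b2))))"
proof -
  have "(mp_kernel (\<tau>1, \<xi>1, q1) (\<tau> - \<tau>1, \<xi> - \<xi>1, q - q1))\<^sup>2
      = \<bar>(3 * \<xi>1\<^sup>2 + q1\<^sup>2) - (3 * (\<xi> - \<xi>1)\<^sup>2 + (q - q1)\<^sup>2)\<bar>"
    by (simp add: mp_kernel_def powr_half_sqrt)
  then show ?thesis
    by (simp add: XJ_weight_def X_weight_def powr_minus divide_simps ennreal_mult[symmetric])
qed

text \<open>\<open>\<nu>\<close> is the measure in the variable \<open>q\<close>: Lebesgue measure for \<open>\<lambda> = \<infinity>\<close>, counting
  measure on \<open>\<int>/\<lambda>\<close> otherwise, the factor \<open>1/\<lambda>\<close> being kept as a separate scale.\<close>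

locale invariant_line_measure =
  fixes \<nu> :: "real measure"
  assumes sigma_finite: "sigma_finite_measure \<nu>"
    and shift_invariant: "shift_invariant \<nu>"
    and measurable_id: "(\<lambda>x. x) \<in> \<nu> \<rightarrow>\<^sub>M lborel"
begin

abbreviation freq :: "(real \<times> real \<times> real) measure" where
  "freq \<equiv> lborel \<Otimes>\<^sub>M lborel \<Otimes>\<^sub>M \<nu>"

lemma sigma_finite_lborel_pair: "sigma_finite_measure (lborel \<Otimes>\<^sub>M \<nu>)"
  by (intro sigma_finite_pair_measure sigma_finite lborel.sigma_finite_measure_axioms)

lemma sigma_finite_freq: "sigma_finite_measure freq"
  by (intro sigma_finite_pair_measure sigma_finite_lborel_pair lborel.sigma_finite_measure_axioms)

lemma shift_invariant_freq: "shift_invariant freq"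
  by (intro shift_invariant_pair_measure shift_invariant_lborel shift_invariant sigma_finite
      sigma_finite_lborel_pair)

lemma borel_measurable_lineI: "h \<in> borel_measurable borel \<Longrightarrow> h \<in> borel_measurable \<nu>"
  using measurable_comp[OF measurable_id] by (simp add: comp_def)

lemma measurable_freq_lborel3: "(\<lambda>z. z) \<in> freq \<rightarrow>\<^sub>M lborel \<Otimes>\<^sub>M lborel \<Otimes>\<^sub>M lborel"
proof -
  have [measurable]: "(\<lambda>z. snd (snd z)) \<in> freq \<rightarrow>\<^sub>M lborel"
    using measurable_comp[OF measurable_comp[OF measurable_snd measurable_snd] measurable_id]
    by (simp add: comp_def)
  have "(\<lambda>z. (fst z, fst (snd z), snd (snd z))) \<in> freq \<rightarrow>\<^sub>M lborel \<Otimes>\<^sub>M lborel \<Otimes>\<^sub>M lborel"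
    by measurable
  then show ?thesis by simp
qed

lemma borel_measurable_freqI:
  "h \<in> borel_measurable (lborel \<Otimes>\<^sub>M lborel \<Otimes>\<^sub>M lborel) \<Longrightarrow> h \<in> borel_measurable freq"
  using measurable_comp[OF measurable_freq_lborel3] by (simp add: comp_def)

lemma borel_measurable_freq_pairI:
  assumes "h \<in> borel_measurable ((lborel \<Otimes>\<^sub>M lborel \<Otimes>\<^sub>M lborel) \<Otimes>\<^sub>M (lborel \<Otimes>\<^sub>M lborel \<Otimes>\<^sub>M lborel))"
  shows "h \<in> borel_measurable (freq \<Otimes>\<^sub>M freq)"
proof -
  have "(\<lambda>x. (fst x, snd x)) \<in> freq \<Otimes>\<^sub>M freq \<rightarrow>\<^sub>M
      (lborel \<Otimes>\<^sub>M lborel \<Otimes>\<^sub>M lborel) \<Otimes>\<^sub>M (lborel \<Otimes>\<^sub>M lborel \<Otimes>\<^sub>M lborel)"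
    by (intro measurable_Pair; rule measurable_comp[OF _ measurable_freq_lborel3, unfolded comp_def]) measurable
  from measurable_comp[OF this assms] show ?thesis
    by (simp add: comp_def)
qed

lemma nn_integral_freq:
  assumes [measurable]: "h \<in> borel_measurable freq"
  shows "(\<integral>\<^sup>+z. h z \<partial>freq) = (\<integral>\<^sup>+q1. \<integral>\<^sup>+\<xi>1. \<integral>\<^sup>+\<tau>1. h (\<tau>1, \<xi>1, q1) \<partial>lborel \<partial>lborel \<partial>\<nu>)"
proof -
  interpret \<nu>: sigma_finite_measure \<nu> by (rule sigma_finite)
  interpret inner: pair_sigma_finite lborel \<nu> ..
  interpret outer: pair_sigma_finite lborel "lborel \<Otimes>\<^sub>M \<nu>"
    by (intro pair_sigma_finite.intro lborel.sigma_finite_measure_axioms sigma_finite_lborel_pair)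
  have "(\<integral>\<^sup>+z. h z \<partial>freq) = (\<integral>\<^sup>+y. \<integral>\<^sup>+\<tau>1. h (\<tau>1, y) \<partial>lborel \<partial>(lborel \<Otimes>\<^sub>M \<nu>))"
    by (rule outer.nn_integral_snd[symmetric]) simp
  also have "\<dots> = (\<integral>\<^sup>+q1. \<integral>\<^sup>+\<xi>1. \<integral>\<^sup>+\<tau>1. h (\<tau>1, \<xi>1, q1) \<partial>lborel \<partial>lborel \<partial>\<nu>)"
    by (subst inner.nn_integral_snd[symmetric]) (simp_all add: split_beta')
  finally show ?thesis .
qed

lemma mp_kernel_weight_integral_le:
  assumes E: "ennreal c * (\<integral>\<^sup>+q. ennreal (japanese q powr (-(2 * \<sigma>))) \<partial>\<nu>) \<le> E"
  shows "(\<integral>\<^sup>+z1. ennreal ((mp_kernel z1 (z - z1))\<^sup>2 / (XJ_weight \<sigma> b1 z1 * X_weight b2 (z - z1)))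
            \<partial>scale_measure (ennreal c) freq)
         \<le> E * (2 * decay_integral b1 * decay_integral b2)"
proof -
  obtain \<tau> \<xi> q where z: "z = (\<tau>, \<xi>, q)" by (cases z) blast
  define J where "J q1 = ennreal (japanese q1 powr (-(2 * \<sigma>)))" for q1
  define X where "X \<tau>1 \<xi>1 q1 = ennreal \<bar>(3 * \<xi>1\<^sup>2 + q1\<^sup>2) - (3 * (\<xi> - \<xi>1)\<^sup>2 + (q - q1)\<^sup>2)\<bar>
      * ennreal (japanese (\<tau>1 - phase \<xi>1 q1) powr (-(2 * b1)))
      * ennreal (japanese (\<tau> - \<tau>1 - phase (\<xi> - \<xi>1) (q - q1)) powr (-(2 * b2)))" for \<tau>1 \<xi>1 q1
  define G where "G z1 = J (snd (snd z1)) * X (fst z1) (fst (snd z1)) (snd (snd z1))" for z1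
  have G_measurable: "G \<in> borel_measurable freq"
    by (rule borel_measurable_freqI) (simp add: G_def[abs_def] J_def X_def)
  have [measurable]: "J \<in> borel_measurable \<nu>"
    by (rule borel_measurable_lineI) (simp add: J_def[abs_def])
  have "(\<integral>\<^sup>+z1. ennreal ((mp_kernel z1 (z - z1))\<^sup>2 / (XJ_weight \<sigma> b1 z1 * X_weight b2 (z - z1)))
            \<partial>scale_measure (ennreal c) freq) = ennreal c * (\<integral>\<^sup>+z1. G z1 \<partial>freq)"
  proof -
    have "ennreal ((mp_kernel z1 (z - z1))\<^sup>2 / (XJ_weight \<sigma> b1 z1 * X_weight b2 (z - z1))) = G z1" for z1
      by (cases z1) (simp add: z mp_kernel_weight_quotient G_def J_def X_def)
    then show ?thesis
      using G_measurable by (simp add: nn_integral_scale_measure)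
  qed
  also have "(\<integral>\<^sup>+z1. G z1 \<partial>freq) = (\<integral>\<^sup>+q1. J q1 * (\<integral>\<^sup>+\<xi>1. \<integral>\<^sup>+\<tau>1. X \<tau>1 \<xi>1 q1 \<partial>lborel \<partial>lborel) \<partial>\<nu>)"
  proof -
    have "(\<lambda>\<tau>1. X \<tau>1 \<xi>1 q1) \<in> borel_measurable lborel" for \<xi>1 q1
      unfolding X_def by measurable
    moreover have "(\<lambda>\<xi>1. \<integral>\<^sup>+\<tau>1. X \<tau>1 \<xi>1 q1 \<partial>lborel) \<in> borel_measurable lborel" for q1
      unfolding X_def by measurable
    ultimately show ?thesis
      unfolding nn_integral_freq[OF G_measurable] by (simp add: G_def nn_integral_cmult)
  qed
  also have "\<dots> \<le> (\<integral>\<^sup>+q1. J q1 * (2 * decay_integral b1 * decay_integral b2) \<partial>\<nu>)"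
    unfolding X_def decay_integral_def
    by (intro nn_integral_mono mult_left_mono resonance_integral_le) simp_all
  also have "\<dots> = (\<integral>\<^sup>+q1. J q1 \<partial>\<nu>) * (2 * decay_integral b1 * decay_integral b2)"
    by (rule nn_integral_multc) measurable
  also have "ennreal c * ((\<integral>\<^sup>+q1. J q1 \<partial>\<nu>) * (2 * decay_integral b1 * decay_integral b2))
      \<le> E * (2 * decay_integral b1 * decay_integral b2)"
    using mult_right_mono[OF E] by (simp add: J_def mult.assoc)
  finally show ?thesis
    by (simp add: mult_left_mono)
qed

lemma scaled_MP_estimate:
  fixes c :: real and f g :: "real \<times> real \<times> real \<Rightarrow> complex"
  defines "M \<equiv> scale_measure (ennreal c) freq"
  assumes E: "ennreal c * (\<integral>\<^sup>+q. ennreal (japanese q powr (-(2 * \<sigma>))) \<partial>\<nu>) \<le> E" and E_fin: "E < \<infinity>"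
    and b1: "b1 > 1/2" and b2: "b2 > 1/2"
    and f: "f \<in> borel_measurable M" and g: "g \<in> borel_measurable M"
    and f_fin: "(\<integral>\<^sup>+z. ennreal (XJ_weight \<sigma> b1 z * (cmod (f z))\<^sup>2) \<partial>M) < \<infinity>"
    and g_fin: "(\<integral>\<^sup>+z. ennreal (X_weight b2 z * (cmod (g z))\<^sup>2) \<partial>M) < \<infinity>"
  shows "(AE z in M. integrable M (\<lambda>z1. complex_of_real (mp_kernel z1 (z - z1)) * f z1 * g (z - z1))) \<and>
     (\<integral>\<^sup>+z. ennreal ((cmod (LINT z1|M. complex_of_real (mp_kernel z1 (z - z1)) * f z1 * g (z - z1)))\<^sup>2) \<partial>M)
       \<le> E * (2 * decay_integral b1 * decay_integral b2)
          * (\<integral>\<^sup>+z. ennreal (XJ_weight \<sigma> b1 z * (cmod (f z))\<^sup>2) \<partial>M)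
          * (\<integral>\<^sup>+z. ennreal (X_weight b2 z * (cmod (g z))\<^sup>2) \<partial>M)"
proof (rule convolution_bilinear_estimate[where k="\<lambda>z z1. mp_kernel z1 (z - z1)"])
  have sets_M: "sets M = sets freq" and sets_MM: "sets (M \<Otimes>\<^sub>M M) = sets (freq \<Otimes>\<^sub>M freq)"
    unfolding M_def by (simp, rule sets_pair_measure_cong) simp_all
  show "sigma_finite_measure M"
    unfolding M_def by (rule sigma_finite_scale_measure[OF sigma_finite_freq]) simp
  show "shift_invariant M"
    unfolding M_def by (rule shift_invariant_scale_measure[OF shift_invariant_freq])
  show "(\<lambda>x. mp_kernel (snd x) (fst x - snd x)) \<in> borel_measurable (M \<Otimes>\<^sub>M M)"
    unfolding measurable_cong_sets[OF sets_MM refl] by (rule borel_measurable_freq_pairI[OF mp_kernel_measurable])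
  show "XJ_weight \<sigma> b1 \<in> borel_measurable M" "X_weight b2 \<in> borel_measurable M"
    unfolding measurable_cong_sets[OF sets_M refl]
    by (rule borel_measurable_freqI[OF XJ_weight_measurable], rule borel_measurable_freqI[OF X_weight_measurable])
  show "(\<integral>\<^sup>+z1. ennreal ((mp_kernel z1 (z - z1))\<^sup>2 / (XJ_weight \<sigma> b1 z1 * X_weight b2 (z - z1))) \<partial>M)
      \<le> E * (2 * decay_integral b1 * decay_integral b2)" for z
    unfolding M_def by (rule mp_kernel_weight_integral_le[OF E])
  show "E * (2 * decay_integral b1 * decay_integral b2) < \<infinity>"
    using E_fin decay_integral_finite[OF b1] decay_integral_finite[OF b2]
    by (simp add: ennreal_mult_less_top)
qed (fact f g f_fin g_fin XJ_weight_pos X_weight_pos)+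

end

lemma invariant_line_measure_lborel: "invariant_line_measure lborel"
  by (intro invariant_line_measure.intro lborel.sigma_finite_measure_axioms shift_invariant_lborel) simp

lemma invariant_line_measure_lattice:
  "lam \<noteq> 0 \<Longrightarrow> invariant_line_measure (count_space (lattice lam))"
  by (intro invariant_line_measure.intro sigma_finite_measure_count_space_countable countable_lattice
      shift_invariant_lattice) simp_all

lemma freq_measure_decomposition:
  fixes lam :: ereal assumes lam: "1 \<le> lam" and \<sigma>: "\<sigma> > 0"
  obtains c \<nu> where "invariant_line_measure \<nu>"
    "freq_measure lam = scale_measure (ennreal c) (lborel \<Otimes>\<^sub>M lborel \<Otimes>\<^sub>M \<nu>)"
    "ennreal c * (\<integral>\<^sup>+q. ennreal (japanese q powr (-(2 * \<sigma>))) \<partial>\<nu>) \<le> ennreal (2 powr (2 * \<sigma>)) * decay_integral \<sigma>"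
proof (cases lam)
  case PInf
  have "decay_integral \<sigma> \<le> ennreal (2 powr (2 * \<sigma>)) * decay_integral \<sigma>"
    using \<sigma> mult_right_mono[of 1 "ennreal (2 powr (2 * \<sigma>))" "decay_integral \<sigma>"]
    by (simp add: ge_one_powr_ge_zero)
  then show ?thesis
    by (intro that[of lborel 1]) (simp_all add: PInf freq_measure_def invariant_line_measure_lborel decay_integral_def)
next
  case (real r)
  with lam have r: "r \<ge> 1" by simp
  show ?thesis
  proof (rule that[of "count_space (lattice r)" "1 / r"])
    show "invariant_line_measure (count_space (lattice r))"
      using r by (intro invariant_line_measure_lattice) simp
    show "freq_measure lam = scale_measure (ennreal (1 / r)) (lborel \<Otimes>\<^sub>M lborel \<Otimes>\<^sub>M count_space (lattice r))"
      by (simp add: real freq_measure_def)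
    show "ennreal (1 / r) * (\<integral>\<^sup>+q. ennreal (japanese q powr (-(2 * \<sigma>))) \<partial>count_space (lattice r))
        \<le> ennreal (2 powr (2 * \<sigma>)) * decay_integral \<sigma>"
      unfolding decay_integral_def using r \<sigma> by (intro lattice_sum_japanese_powr_le) simp_all
  qed
qed (use lam in simp)

lemma ennreal_divide_less_top_iff: "D > 0 \<Longrightarrow> x / ennreal D < \<infinity> \<longleftrightarrow> x < \<infinity>"
  by (auto simp: divide_ennreal_def inverse_ennreal ennreal_mult_less_top)

lemma ennreal_divide_mult_le:
  fixes x y z K :: ennreal and D :: real
  assumes "x \<le> K * y * z" and D: "D > 0"
  shows "x / ennreal D \<le> K * ennreal D * (y / ennreal D) * (z / ennreal D)"
proof -
  have "K * ennreal D * (y / ennreal D) * (z / ennreal D) = K * y * z / ennreal D"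
  proof -
    have "ennreal D * inverse (ennreal D) = 1"
      using D by (simp add: inverse_ennreal ennreal_mult[symmetric])
    then show ?thesis
      by (simp add: divide_ennreal_def mult_ac)
  qed
  with assms show ?thesis
    by (simp add: divide_right_mono_ennreal)
qed

definition MP_constant :: "real \<Rightarrow> real \<Rightarrow> real \<Rightarrow> ennreal" where
  "MP_constant \<sigma> b1 b2 = ennreal (2 powr (2 * \<sigma>)) * decay_integral \<sigma>
     * (2 * decay_integral b1 * decay_integral b2) * ennreal ((2 * pi) ^ 3)"

lemma MP_constant_finite:
  assumes "\<sigma> > 1/2" "b1 > 1/2" "b2 > 1/2"
  shows "MP_constant \<sigma> b1 b2 < \<infinity>"
  using decay_integral_finite[OF assms(1)] decay_integral_finite[OF assms(2)] decay_integral_finite[OF assms(3)]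
  by (simp add: MP_constant_def ennreal_mult_less_top)

lemma MP_hat_L2_estimate:
  fixes lam :: ereal and f g :: "real \<times> real \<times> real \<Rightarrow> complex"
  assumes lam: "1 \<le> lam" and \<sigma>: "\<sigma> > 1/2" and b1: "b1 > 1/2" and b2: "b2 > 1/2"
    and f: "f \<in> borel_measurable (freq_measure lam)" and g: "g \<in> borel_measurable (freq_measure lam)"
    and f_fin: "XJsq lam \<sigma> b1 f < \<infinity>" and g_fin: "Xsq lam 0 b2 g < \<infinity>"
  shows "(AE z in freq_measure lam. integrable (freq_measure lam)
            (\<lambda>z1. complex_of_real (mp_kernel z1 (z - z1)) * f z1 * g (z - z1))) \<and>
         L2sq lam (MP_hat lam f g) \<le> MP_constant \<sigma> b1 b2 * XJsq lam \<sigma> b1 f * Xsq lam 0 b2 g"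
proof -
  have \<sigma>_pos: "\<sigma> > 0" using \<sigma> by simp
  obtain c \<nu> where \<nu>: "invariant_line_measure \<nu>"
    and M: "freq_measure lam = scale_measure (ennreal c) (lborel \<Otimes>\<^sub>M lborel \<Otimes>\<^sub>M \<nu>)"
    and E: "ennreal c * (\<integral>\<^sup>+q. ennreal (japanese q powr (-(2 * \<sigma>))) \<partial>\<nu>) \<le> ennreal (2 powr (2 * \<sigma>)) * decay_integral \<sigma>"
    using freq_measure_decomposition[OF lam \<sigma>_pos] by metis
  have D: "(2 * pi) ^ 3 > (0::real)" by simp
  have "(AE z in freq_measure lam. integrable (freq_measure lam)
            (\<lambda>z1. complex_of_real (mp_kernel z1 (z - z1)) * f z1 * g (z - z1))) \<and>
     (\<integral>\<^sup>+z. ennreal ((cmod (MP_hat lam f g z))\<^sup>2) \<partial>freq_measure lam)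
       \<le> ennreal (2 powr (2 * \<sigma>)) * decay_integral \<sigma> * (2 * decay_integral b1 * decay_integral b2)
          * (\<integral>\<^sup>+z. ennreal (XJ_weight \<sigma> b1 z * (cmod (f z))\<^sup>2) \<partial>freq_measure lam)
          * (\<integral>\<^sup>+z. ennreal (X_weight b2 z * (cmod (g z))\<^sup>2) \<partial>freq_measure lam)"
    using f g f_fin g_fin decay_integral_finite[OF \<sigma>]
    unfolding MP_hat_def M XJsq_eq Xsq_eq ennreal_divide_less_top_iff[OF D]
    by (intro invariant_line_measure.scaled_MP_estimate[OF \<nu> E _ b1 b2]) (simp_all add: ennreal_mult_less_top)
  then show ?thesis
    unfolding L2sq_eq XJsq_eq Xsq_eq MP_constant_def
    using ennreal_divide_mult_le[OF _ D] by blast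
qed

theorem proposition3p1:
  fixes \<epsilon> b1 b2 :: real
  assumes "\<epsilon> > 0" and "b1 > 1/2" and "b2 > 1/2"
  shows "\<exists>C::real. C > 0 \<and>
    (\<forall>lam::ereal. \<forall>f g :: real \<times> real \<times> real \<Rightarrow> complex.
       1 \<le> lam \<longrightarrow>
       f \<in> borel_measurable (freq_measure lam) \<longrightarrow>
       g \<in> borel_measurable (freq_measure lam) \<longrightarrow>
       XJsq lam (1/2 + \<epsilon>) b1 f < \<infinity> \<longrightarrow>
       Xsq lam 0 b2 g < \<infinity> \<longrightarrow>
       (AE z in freq_measure lam.
          integrable (freq_measure lam)
            (\<lambda>z1. complex_of_real (mp_kernel z1 (z - z1)) * f z1 * g (z - z1))) \<and>
       L2sq lam (MP_hat lam f g) \<le> ennreal C * XJsq lam (1/2 + \<epsilon>) b1 f * Xsq lam 0 b2 g)"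
proof -
  have \<sigma>: "1/2 + \<epsilon> > 1/2" using assms(1) by simp
  define C where "C = enn2real (MP_constant (1/2 + \<epsilon>) b1 b2) + 1"
  have "C > 0" by (simp add: C_def add_nonneg_pos)
  have C: "MP_constant (1/2 + \<epsilon>) b1 b2 \<le> ennreal C"
    using MP_constant_finite[OF \<sigma> assms(2,3)]
    by (cases "MP_constant (1/2 + \<epsilon>) b1 b2" rule: ennreal_cases) (simp_all add: C_def ennreal_leI)
  show ?thesis
  proof (intro exI[of _ C] conjI[OF \<open>C > 0\<close>] allI impI)
    fix lam :: ereal and f g :: "real \<times> real \<times> real \<Rightarrow> complex"
    assume "1 \<le> lam" "f \<in> borel_measurable (freq_measure lam)" "g \<in> borel_measurable (freq_measure lam)"
      "XJsq lam (1/2 + \<epsilon>) b1 f < \<infinity>" "Xsq lam 0 b2 g < \<infinity>"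
    from MP_hat_L2_estimate[OF this(1) \<sigma> assms(2,3) this(2-)]
    show "(AE z in freq_measure lam. integrable (freq_measure lam)
            (\<lambda>z1. complex_of_real (mp_kernel z1 (z - z1)) * f z1 * g (z - z1))) \<and>
          L2sq lam (MP_hat lam f g) \<le> ennreal C * XJsq lam (1/2 + \<epsilon>) b1 f * Xsq lam 0 b2 g"
      using C by (auto elim!: order_trans intro!: mult_right_mono)
  qed
qed

end
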